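(* Let $G=(V,E,w)$ be a weighted graph, $\alpha\geq 1$, $\beta\geq 0$, and consider an iteration of the $(\alpha,\beta)$-completion algorithm in which the current subgraph is $H\subseteq G$, the chosen pair is $(x,y)$ (so $\mathrm{dist}_H(x,y)>\alpha\,\mathrm{dist}_G(x,y)+\beta W_{\max}(G)$), $P_{x,y}=(x=x_0,x_1,\ldots,x_t=y)$ is the chosen shortest $x$–$y$ path in $G$, and $\mathcal{S}=([i_0,i_1],[i_1,i_2],\ldots,[i_{s-1},i_s])$ is the chosen minimal $\alpha$-segmentation of $P_{x,y}$ with respect to $H$. Let $H'=H\cup E_\alpha(\mathcal{S},H)$. Then for any $0\leq \ell<r\leq s$, \[ \mathrm{dist}_{H'}(x_{i_\ell},x_{i_r})\leq \alpha\cdot \mathrm{dist}_G(x_{i_\ell},x_{i_r}). \]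
   Context: $G$ is an undirected graph with positive edge weights $w$, in which every edge is a shortest path between its endpoints. $\mathrm{dist}_X$ is the weighted shortest-path distance in a graph $X$, and $W_{\max}(G)$ is the maximum edge weight of $G$. For a shortest path $P_{x,y}=(x_0,\ldots,x_t)$ in $G$ and a subgraph $H\subseteq G$, an $\alpha$-segmentation of $P_{x,y}$ (w.r.t. $H$) is a sequence of index intervals $([i_0,i_1],\ldots,[i_{s-1},i_s])$ with $0=i_0<i_1<\cdots<i_s=t$ such that every segment with $i_j-i_{j-1}\geq 2$ satisfies $\mathrm{dist}_H(x_{i_{j-1}},x_{i_j})\leq \alpha\,\mathrm{dist}_G(x_{i_{j-1}},x_{i_j})$. It is minimal if no consecutive sequence of its segments can be merged into one segment so as to produce another $\alpha$-segmentation of the same path. $E(\mathcal{S})$ is the set of edges $\{x_{i_{j-1}},x_{i_j}\}$ corresponding to segments with $i_j-i_{j-1}=1$, and $E_\alpha(\mathcal{S},H)=\{e=\{u,v\}\in E(\mathcal{S}) : \mathrm{dist}_H(u,v)>\alpha\, w(e)\}$. The $(\alpha,\beta)$-completion algorithm starts from an initial subgraph $H\gets H_0\subseteq G$ and, while there exist $x,y$ with $\mathrm{dist}_H(x,y)>\alpha\,\mathrm{dist}_G(x,y)+\beta W_{\max}(G)$, picks such a pair, takes a shortest $x$–$y$ path $P_{x,y}$ in $G$, finds a minimal $\alpha$-segmentation $\mathcal{S}$ of $P_{x,y}$ w.r.t. the current $H$, and updates $H\gets H\cup E_\alpha(\mathcal{S},H)$. *)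

theory Defs
  imports "HOL-Library.Extended_Real"
begin

text \<open>Weighted undirected graphs: a finite vertex set V, an edge set E of
  two-element subsets of V, and a weight function w on edges.
  Subgraphs are edge subsets on the same vertex set.\<close>

definition weighted_graph :: "'a set \<Rightarrow> 'a set set \<Rightarrow> ('a set \<Rightarrow> real) \<Rightarrow> bool" where
  "weighted_graph V E w \<longleftrightarrow> finite V \<and>
     (\<forall>e\<in>E. \<exists>u v. e = {u, v} \<and> u \<in> V \<and> v \<in> V \<and> u \<noteq> v) \<and>
     (\<forall>e\<in>E. w e > 0)"

definition is_walk :: "'a set set \<Rightarrow> 'a list \<Rightarrow> bool" where
  "is_walk E xs \<longleftrightarrow> xs \<noteq> [] \<and> (\<forall>i. Suc i < length xs \<longrightarrow> {xs ! i, xs ! Suc i} \<in> E)"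

definition walk_weight :: "('a set \<Rightarrow> real) \<Rightarrow> 'a list \<Rightarrow> real" where
  "walk_weight w xs = (\<Sum>i<length xs - 1. w {xs ! i, xs ! Suc i})"

text \<open>Weighted shortest-path distance (infinite if no walk exists).\<close>
definition dist_in :: "'a set set \<Rightarrow> ('a set \<Rightarrow> real) \<Rightarrow> 'a \<Rightarrow> 'a \<Rightarrow> ereal" where
  "dist_in E w x y = Inf {ereal (walk_weight w xs) | xs.
      is_walk E xs \<and> hd xs = x \<and> last xs = y}"

definition edges_shortest :: "'a set set \<Rightarrow> ('a set \<Rightarrow> real) \<Rightarrow> bool" where
  "edges_shortest E w \<longleftrightarrow> (\<forall>u v. {u, v} \<in> E \<longrightarrow> dist_in E w u v = ereal (w {u, v}))"

definition W_max :: "'a set set \<Rightarrow> ('a set \<Rightarrow> real) \<Rightarrow> real" where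
  "W_max E w = Max (w ` E)"

definition shortest_path :: "'a set set \<Rightarrow> ('a set \<Rightarrow> real) \<Rightarrow> 'a \<Rightarrow> 'a \<Rightarrow> 'a list \<Rightarrow> bool" where
  "shortest_path E w x y P \<longleftrightarrow> is_walk E P \<and> hd P = x \<and> last P = y \<and>
     ereal (walk_weight w P) = dist_in E w x y"

text \<open>An alpha-segmentation of path P (in G = (E,w)) w.r.t. H, given as the
  list of indices [i_0, ..., i_s].\<close>
definition is_segmentation ::
  "'a set set \<Rightarrow> ('a set \<Rightarrow> real) \<Rightarrow> 'a set set \<Rightarrow> real \<Rightarrow> 'a list \<Rightarrow> nat list \<Rightarrow> bool" where
  "is_segmentation E w H \<alpha> P I \<longleftrightarrow>
     I \<noteq> [] \<and> I ! 0 = 0 \<and> last I = length P - 1 \<and> sorted_wrt (<) I \<and>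
     (\<forall>j. 0 < j \<and> j < length I \<longrightarrow> I ! j - I ! (j - 1) \<ge> 2 \<longrightarrow>
        dist_in H w (P ! (I ! (j - 1))) (P ! (I ! j))
          \<le> ereal \<alpha> * dist_in E w (P ! (I ! (j - 1))) (P ! (I ! j)))"

text \<open>Minimality: merging any block of consecutive segments (segments a+1..b,
  with b - a >= 2, i.e. at least two segments) into one never yields another
  alpha-segmentation.\<close>
definition is_minimal_segmentation ::
  "'a set set \<Rightarrow> ('a set \<Rightarrow> real) \<Rightarrow> 'a set set \<Rightarrow> real \<Rightarrow> 'a list \<Rightarrow> nat list \<Rightarrow> bool" where
  "is_minimal_segmentation E w H \<alpha> P I \<longleftrightarrow> is_segmentation E w H \<alpha> P I \<and>
     (\<forall>a b. a + 2 \<le> b \<and> b < length I \<longrightarrow>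
        \<not> is_segmentation E w H \<alpha> P (take (Suc a) I @ drop b I))"

definition seg_edges :: "'a list \<Rightarrow> nat list \<Rightarrow> 'a set set" where
  "seg_edges P I = {{P ! (I ! (j - 1)), P ! (I ! j)} | j.
      0 < j \<and> j < length I \<and> I ! j - I ! (j - 1) = 1}"

definition seg_edges_alpha ::
  "('a set \<Rightarrow> real) \<Rightarrow> 'a set set \<Rightarrow> real \<Rightarrow> 'a list \<Rightarrow> nat list \<Rightarrow> 'a set set" where
  "seg_edges_alpha w H \<alpha> P I = {e \<in> seg_edges P I. \<forall>u v. e = {u, v} \<longrightarrow>
      dist_in H w u v > ereal (\<alpha> * w e)}"

end

theory Submission
  imports Defs
begin

text \<open>Every segment [i_(j-1), i_j] of the segmentation is bridged in H' by a path of
  length at most \<alpha> times its length along P: a long segment already is, in H, by the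
  segmentation property; a single-edge segment is either within stretch \<alpha> in H or its
  edge lies in E_\<alpha>(S,H). Chaining the segments from l to r by the triangle inequality, and
  using that a subpath of the shortest path P is itself shortest, gives the bound.\<close>

lemma is_walk_Cons_Cons [simp]:
  "is_walk F (a # b # xs) \<longleftrightarrow> {a, b} \<in> F \<and> is_walk F (b # xs)"
  by (auto simp: is_walk_def nth_Cons split: nat.splits)

lemma is_walk_singleton [simp]: "is_walk F [a]"
  by (simp add: is_walk_def)

lemma walk_weight_singleton [simp]: "walk_weight w [a] = 0"
  by (simp add: walk_weight_def)

lemma walk_weight_Cons_Cons [simp]:
  "walk_weight w (a # b # xs) = w {a, b} + walk_weight w (b # xs)"
  unfolding walk_weight_def by (simp del: sum.lessThan_Suc add: sum.lessThan_Suc_shift)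

lemma is_walk_nonempty: "is_walk F xs \<Longrightarrow> xs \<noteq> []"
  by (simp add: is_walk_def)

lemma is_walk_append:
  "is_walk F xs \<Longrightarrow> is_walk F ys \<Longrightarrow> last xs = hd ys \<Longrightarrow> is_walk F (xs @ tl ys)"
proof (induction xs rule: induct_list012)
  case (2 x)
  then show ?case
    by (metis append_Cons append_Nil is_walk_nonempty last.simps list.collapse)
qed (auto dest: is_walk_nonempty)

lemma walk_weight_append:
  "xs \<noteq> [] \<Longrightarrow> ys \<noteq> [] \<Longrightarrow> last xs = hd ys \<Longrightarrow>
   walk_weight w (xs @ tl ys) = walk_weight w xs + walk_weight w ys"
  by (induction xs rule: induct_list012) auto

lemma is_walk_rev: "is_walk F xs \<Longrightarrow> is_walk F (rev xs)"
proof (induction xs rule: induct_list012)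
  case (3 x y zs)
  have "rev (x # y # zs) = rev (y # zs) @ tl [y, x]"
    by simp
  with 3 show ?case
    by (metis insert_commute is_walk_Cons_Cons is_walk_append is_walk_singleton last_rev list.sel(1))
qed auto

lemma walk_weight_rev: "walk_weight w (rev xs) = walk_weight w xs"
proof (induction xs rule: induct_list012)
  case (3 x y zs)
  have "walk_weight w (rev (y # zs) @ tl [y, x]) = walk_weight w (rev (y # zs)) + walk_weight w [y, x]"
    by (rule walk_weight_append) auto
  with 3 show ?case
    by (simp add: insert_commute)
qed auto

definition walks_between :: "'a set set \<Rightarrow> 'a \<Rightarrow> 'a \<Rightarrow> 'a list set" where
  "walks_between F x y = {xs. is_walk F xs \<and> hd xs = x \<and> last xs = y}"

lemma walks_between_append:
  "xs \<in> walks_between F a b \<Longrightarrow> ys \<in> walks_between F b c \<Longrightarrow> xs @ tl ys \<in> walks_between F a c"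
  using is_walk_append[of F xs ys] by (cases ys) (auto simp: walks_between_def dest: is_walk_nonempty)

lemma walk_weight_append_walks_between:
  "xs \<in> walks_between F a b \<Longrightarrow> ys \<in> walks_between F b c \<Longrightarrow>
   walk_weight w (xs @ tl ys) = walk_weight w xs + walk_weight w ys"
  by (intro walk_weight_append) (auto simp: walks_between_def dest: is_walk_nonempty)

lemma dist_in_eq_INF: "dist_in F w x y = (INF xs\<in>walks_between F x y. ereal (walk_weight w xs))"
  by (simp add: dist_in_def walks_between_def setcompr_eq_image)

lemma dist_in_le_walk_weight: "xs \<in> walks_between F x y \<Longrightarrow> dist_in F w x y \<le> ereal (walk_weight w xs)"
  unfolding dist_in_eq_INF by (rule INF_lower)

lemma dist_in_edge: "{u, v} \<in> F \<Longrightarrow> dist_in F w u v \<le> ereal (w {u, v})"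
  using dist_in_le_walk_weight[of "[u, v]" F u v w] by (simp add: walks_between_def)

lemma dist_in_self_nonpos: "dist_in F w u u \<le> 0"
  using dist_in_le_walk_weight[of "[u]" F u u w] by (simp add: walks_between_def zero_ereal_def)

lemma walk_weight_nonneg: "\<forall>e\<in>F. w e > 0 \<Longrightarrow> is_walk F xs \<Longrightarrow> walk_weight w xs \<ge> 0"
  unfolding walk_weight_def is_walk_def by (intro sum_nonneg) (auto intro: less_imp_le)

lemma dist_in_antimono: "F \<subseteq> F' \<Longrightarrow> dist_in F' w x y \<le> dist_in F w x y"
  unfolding dist_in_eq_INF by (rule INF_superset_mono) (auto simp: walks_between_def is_walk_def)

lemma dist_in_commute: "dist_in F w x y = dist_in F w y x"
proof -
  have "dist_in F w x y \<le> dist_in F w y x" for x y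
    unfolding dist_in_eq_INF
  proof (rule INF_greatest)
    fix xs assume "xs \<in> walks_between F y x"
    then have "rev xs \<in> walks_between F x y"
      by (auto simp: walks_between_def is_walk_rev hd_rev last_rev)
    then show "(INF xs\<in>walks_between F x y. ereal (walk_weight w xs)) \<le> ereal (walk_weight w xs)"
      by (metis INF_lower walk_weight_rev)
  qed
  then show ?thesis
    by (metis antisym)
qed

lemma INF_add_INF_ereal_nonneg:
  fixes f g :: "_ \<Rightarrow> ereal"
  assumes "\<And>i. i \<in> A \<Longrightarrow> 0 \<le> f i" and "\<And>j. j \<in> B \<Longrightarrow> 0 \<le> g j"
  shows "(INF i\<in>A. f i) + (INF j\<in>B. g j) = (INF i\<in>A. INF j\<in>B. f i + g j)"
proof -
  have nonneg: "(INF i\<in>A. f i) \<ge> 0" "(INF j\<in>B. g j) \<ge> 0"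
    using assms by (auto intro: INF_greatest)
  show ?thesis
  proof (cases "A = {} \<or> B = {}")
    case True
    with nonneg show ?thesis
      by (cases "A = {}") (auto simp: top_ereal_def)
  next
    case False
    have "(INF i\<in>A. f i) + (INF j\<in>B. g j) = (INF i\<in>A. f i + (INF j\<in>B. g j))"
      using False assms nonneg by (subst INF_ereal_add_left) auto
    also have "\<dots> = (INF i\<in>A. INF j\<in>B. f i + g j)"
      using False assms by (intro INF_cong refl INF_ereal_add_right[symmetric]) auto
    finally show ?thesis .
  qed
qed

lemma dist_in_triangle:
  assumes "\<forall>e\<in>F. w e > 0"
  shows "dist_in F w x z \<le> dist_in F w x y + dist_in F w y z"
  unfolding dist_in_eq_INF
proof (subst INF_add_INF_ereal_nonneg)
  show "(INF xs\<in>walks_between F x z. ereal (walk_weight w xs))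
      \<le> (INF xs\<in>walks_between F x y. INF ys\<in>walks_between F y z.
            ereal (walk_weight w xs) + ereal (walk_weight w ys))"
  proof (intro INF_greatest)
    fix xs ys assume xs: "xs \<in> walks_between F x y" and ys: "ys \<in> walks_between F y z"
    then have "xs @ tl ys \<in> walks_between F x z"
      by (rule walks_between_append)
    moreover have "walk_weight w (xs @ tl ys) = walk_weight w xs + walk_weight w ys"
      using xs ys by (rule walk_weight_append_walks_between)
    ultimately
    show "(INF xs\<in>walks_between F x z. ereal (walk_weight w xs))
        \<le> ereal (walk_weight w xs) + ereal (walk_weight w ys)"
      by (metis INF_lower plus_ereal.simps(1))
  qed
qed (use assms in \<open>auto simp: walks_between_def intro: walk_weight_nonneg\<close>)

definition segment_weight :: "('a set \<Rightarrow> real) \<Rightarrow> 'a list \<Rightarrow> nat \<Rightarrow> nat \<Rightarrow> real" where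
  "segment_weight w P i k = (\<Sum>m=i..<k. w {P ! m, P ! Suc m})"

lemma segment_weight_split:
  "i \<le> j \<Longrightarrow> j \<le> k \<Longrightarrow> segment_weight w P i k = segment_weight w P i j + segment_weight w P j k"
  unfolding segment_weight_def by (simp add: sum.atLeastLessThan_concat)

lemma walk_weight_eq_segment_weight: "walk_weight w P = segment_weight w P 0 (length P - 1)"
  by (simp add: walk_weight_def segment_weight_def atLeast0LessThan)

lemma segment_walk:
  assumes "is_walk F P" and "i \<le> k" and "k < length P"
  obtains s where "s \<in> walks_between F (P ! i) (P ! k)" and "walk_weight w s = segment_weight w P i k"
proof
  let ?s = "drop i (take (Suc k) P)"
  have len: "length ?s = Suc k - i" and nth: "\<And>n. n < Suc k - i \<Longrightarrow> ?s ! n = P ! (i + n)"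
    using assms by auto
  have "is_walk F ?s"
    using assms len nth unfolding is_walk_def by auto
  moreover have "?s \<noteq> []"
    using len assms(2) by auto
  ultimately show "?s \<in> walks_between F (P ! i) (P ! k)"
    using len nth assms(2) by (auto simp: walks_between_def hd_conv_nth last_conv_nth)
  have "walk_weight w ?s = (\<Sum>n<k - i. w {P ! (i + n), P ! Suc (i + n)})"
    unfolding walk_weight_def using len nth by (intro sum.cong) auto
  also have "\<dots> = segment_weight w P i k"
    unfolding segment_weight_def using assms(2)
    by (simp add: sum.atLeastLessThan_shift_0[of _ i k] lessThan_atLeast0)
  finally show "walk_weight w ?s = segment_weight w P i k" .
qed

lemma dist_in_le_segment_weight:
  "is_walk F P \<Longrightarrow> i \<le> k \<Longrightarrow> k < length P \<Longrightarrow> dist_in F w (P ! i) (P ! k) \<le> ereal (segment_weight w P i k)"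
  by (metis dist_in_le_walk_weight segment_walk)

lemma shortest_path_segment_weight:
  assumes sp: "shortest_path E w x y P" and "i \<le> k" and "k < length P"
  shows "ereal (segment_weight w P i k) \<le> dist_in E w (P ! i) (P ! k)"
  unfolding dist_in_eq_INF
proof (rule INF_greatest)
  fix Q assume Q: "Q \<in> walks_between E (P ! i) (P ! k)"
  define t where "t = length P - 1"
  have walk: "is_walk E P" and ends: "P ! 0 = x" "P ! t = y"
    and opt: "ereal (walk_weight w P) = dist_in E w x y"
    using sp is_walk_nonempty[of E P]
    by (auto simp: shortest_path_def t_def hd_conv_nth last_conv_nth)
  have "k \<le> t" "t < length P"
    using assms by (auto simp: t_def)
  obtain A where A: "A \<in> walks_between E x (P ! i)" "walk_weight w A = segment_weight w P 0 i"
    using segment_walk[OF walk, of 0 i] assms ends by auto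
  obtain C where C: "C \<in> walks_between E (P ! k) y" "walk_weight w C = segment_weight w P k t"
    using segment_walk[OF walk, of k t] \<open>k \<le> t\<close> \<open>t < length P\<close> ends by auto
  have AQ: "A @ tl Q \<in> walks_between E x (P ! k)"
    using A(1) Q by (rule walks_between_append)
  have "dist_in E w x y \<le> ereal (walk_weight w ((A @ tl Q) @ tl C))"
    using walks_between_append[OF AQ C(1)] by (rule dist_in_le_walk_weight)
  also have "walk_weight w ((A @ tl Q) @ tl C) = segment_weight w P 0 i + walk_weight w Q + segment_weight w P k t"
    using walk_weight_append_walks_between[OF AQ C(1)] walk_weight_append_walks_between[OF A(1) Q] A C
    by simp
  finally have "walk_weight w P \<le> segment_weight w P 0 i + walk_weight w Q + segment_weight w P k t"
    by (simp flip: opt)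
  moreover have "walk_weight w P = segment_weight w P 0 i + segment_weight w P i k + segment_weight w P k t"
    using assms \<open>k \<le> t\<close> segment_weight_split[of i k t w P] segment_weight_split[of 0 i t w P]
    by (simp add: walk_weight_eq_segment_weight t_def)
  ultimately show "ereal (segment_weight w P i k) \<le> ereal (walk_weight w Q)"
    by simp
qed

lemma segmentation_index_less_length:
  assumes "is_segmentation E w H \<alpha> P I" and "P \<noteq> []" and "j < length I"
  shows "I ! j < length P"
proof -
  have "sorted I" and "I \<noteq> []" and "last I = length P - 1"
    using assms(1) by (auto simp: is_segmentation_def strict_sorted_imp_sorted)
  then have "I ! j \<le> I ! (length I - 1)"
    using assms(3) by (intro sorted_nth_mono) auto
  then have "I ! j \<le> length P - 1"
    using \<open>I \<noteq> []\<close> \<open>last I = length P - 1\<close> by (simp add: last_conv_nth)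
  with \<open>P \<noteq> []\<close> show ?thesis
    by (cases P) auto
qed

lemma seg_edges_subset:
  assumes "is_walk E P" and "is_segmentation E w H \<alpha> P I"
  shows "seg_edges P I \<subseteq> E"
proof
  fix e assume "e \<in> seg_edges P I"
  then obtain j where e: "e = {P ! (I ! (j - 1)), P ! (I ! j)}" and j: "0 < j" "j < length I"
    and "I ! j - I ! (j - 1) = 1"
    unfolding seg_edges_def by blast
  then have short: "I ! j = Suc (I ! (j - 1))"
    by simp
  have "I ! j < length P"
    using segmentation_index_less_length[OF assms(2) is_walk_nonempty[OF assms(1)] j(2)] .
  then show "e \<in> E"
    using assms(1) e short unfolding is_walk_def by metis
qed

lemma dist_in_completion_seg_edge:
  assumes "{u, v} \<in> seg_edges P I" and "\<alpha> \<ge> 1" and "w {u, v} > 0"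
  shows "dist_in (H \<union> seg_edges_alpha w H \<alpha> P I) w u v \<le> ereal (\<alpha> * w {u, v})"
proof (cases "{u, v} \<in> seg_edges_alpha w H \<alpha> P I")
  case True
  then have "dist_in (H \<union> seg_edges_alpha w H \<alpha> P I) w u v \<le> ereal (w {u, v})"
    by (intro dist_in_edge) simp
  also have "\<dots> \<le> ereal (\<alpha> * w {u, v})"
    using assms(2,3) by simp
  finally show ?thesis .
next
  case False
  with assms(1) obtain u' v' where "{u, v} = {u', v'}" and "dist_in H w u' v' \<le> ereal (\<alpha> * w {u, v})"
    unfolding seg_edges_alpha_def by (auto simp: not_less)
  then have "dist_in H w u v \<le> ereal (\<alpha> * w {u, v})"
    by (metis doubleton_eq_iff dist_in_commute)
  then show ?thesis
    by (meson dist_in_antimono order_trans sup_ge1)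
qed

lemma dist_in_completion_segment:
  assumes pos: "\<forall>e\<in>E. w e > 0" and "\<alpha> \<ge> 1" and walk: "is_walk E P"
    and seg: "is_segmentation E w H \<alpha> P I" and j: "0 < j" "j < length I"
  shows "dist_in (H \<union> seg_edges_alpha w H \<alpha> P I) w (P ! (I ! (j - 1))) (P ! (I ! j))
           \<le> ereal (\<alpha> * segment_weight w P (I ! (j - 1)) (I ! j))"
proof -
  define p q where "p = I ! (j - 1)" and "q = I ! j"
  have "p < q"
    using seg j by (auto simp: p_def q_def is_segmentation_def sorted_wrt_nth_less)
  have "q < length P"
    using segmentation_index_less_length[OF seg is_walk_nonempty[OF walk] j(2)] by (simp add: q_def)
  show ?thesis
  proof (cases "q - p \<ge> 2")
    case True
    have "dist_in (H \<union> seg_edges_alpha w H \<alpha> P I) w (P ! p) (P ! q) \<le> dist_in H w (P ! p) (P ! q)"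
      by (simp add: dist_in_antimono)
    also have "\<dots> \<le> ereal \<alpha> * dist_in E w (P ! p) (P ! q)"
      using seg j True by (simp add: is_segmentation_def p_def q_def)
    also have "\<dots> \<le> ereal \<alpha> * ereal (segment_weight w P p q)"
      using dist_in_le_segment_weight[OF walk] \<open>p < q\<close> \<open>q < length P\<close> \<open>\<alpha> \<ge> 1\<close>
      by (intro ereal_mult_left_mono) auto
    finally show ?thesis
      by (simp add: p_def q_def)
  next
    case False
    then have q: "q = Suc p"
      using \<open>p < q\<close> by simp
    have "{P ! p, P ! q} \<in> seg_edges P I"
      unfolding seg_edges_def using j q by (auto simp: p_def q_def)
    moreover have "w {P ! p, P ! q} > 0"
      using pos walk \<open>q < length P\<close> q unfolding is_walk_def by auto
    moreover have "segment_weight w P p q = w {P ! p, P ! q}"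
      by (simp add: segment_weight_def q)
    ultimately show ?thesis
      unfolding p_def[symmetric] q_def[symmetric]
      using dist_in_completion_seg_edge[OF _ \<open>\<alpha> \<ge> 1\<close>] by simp
  qed
qed

lemma dist_in_le_segment_weight_chain:
  assumes pos: "\<forall>e\<in>F. w e > 0" and "sorted I" and "l \<le> r" and "r < length I"
    and step: "\<And>j. 0 < j \<Longrightarrow> j < length I \<Longrightarrow>
      dist_in F w (P ! (I ! (j - 1))) (P ! (I ! j)) \<le> ereal (\<alpha> * segment_weight w P (I ! (j - 1)) (I ! j))"
  shows "dist_in F w (P ! (I ! l)) (P ! (I ! r)) \<le> ereal (\<alpha> * segment_weight w P (I ! l) (I ! r))"
  using \<open>l \<le> r\<close> \<open>r < length I\<close>
proof (induction r rule: dec_induct)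
  case base
  then show ?case
    using dist_in_self_nonpos by (simp add: segment_weight_def zero_ereal_def)
next
  case (step r)
  have "dist_in F w (P ! (I ! l)) (P ! (I ! Suc r))
      \<le> dist_in F w (P ! (I ! l)) (P ! (I ! r)) + dist_in F w (P ! (I ! r)) (P ! (I ! Suc r))"
    using pos by (rule dist_in_triangle)
  also have "\<dots> \<le> ereal (\<alpha> * segment_weight w P (I ! l) (I ! r))
      + ereal (\<alpha> * segment_weight w P (I ! r) (I ! Suc r))"
    using step.IH step.prems assms(5)[of "Suc r"] by (intro add_mono) auto
  also have "\<dots> = ereal (\<alpha> * segment_weight w P (I ! l) (I ! Suc r))"
    using \<open>sorted I\<close> step segment_weight_split[of "I ! l" "I ! r" "I ! Suc r" w P]
    by (simp add: sorted_nth_mono distrib_left)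
  finally show ?case .
qed

theorem lemma3p1:
  fixes V :: "'a set" and E H :: "'a set set" and w :: "'a set \<Rightarrow> real"
    and \<alpha> \<beta> :: real and x y :: 'a and P :: "'a list" and I :: "nat list"
  assumes "weighted_graph V E w"
    and "edges_shortest E w"
    and "\<alpha> \<ge> 1" and "\<beta> \<ge> 0"
    and "H \<subseteq> E"
    and "x \<in> V" and "y \<in> V"
    and "dist_in H w x y > ereal \<alpha> * dist_in E w x y + ereal (\<beta> * W_max E w)"
    and "shortest_path E w x y P"
    and "is_minimal_segmentation E w H \<alpha> P I"
    and "l < r" and "r < length I"
  shows "dist_in (H \<union> seg_edges_alpha w H \<alpha> P I) w (P ! (I ! l)) (P ! (I ! r))
           \<le> ereal \<alpha> * dist_in E w (P ! (I ! l)) (P ! (I ! r))"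
proof -
  let ?H' = "H \<union> seg_edges_alpha w H \<alpha> P I"
  have pos: "\<forall>e\<in>E. w e > 0"
    using assms(1) by (simp add: weighted_graph_def)
  have walk: "is_walk E P"
    using assms(9) by (simp add: shortest_path_def)
  have seg: "is_segmentation E w H \<alpha> P I"
    using assms(10) by (simp add: is_minimal_segmentation_def)
  then have sorted: "sorted_wrt (<) I"
    by (simp add: is_segmentation_def)
  have idx: "I ! l \<le> I ! r" "I ! r < length P"
    using sorted assms(11,12) segmentation_index_less_length[OF seg is_walk_nonempty[OF walk]]
    by (simp_all add: sorted_wrt_nth_less less_imp_le)
  have "?H' \<subseteq> E"
    using assms(5) seg_edges_subset[OF walk seg] by (auto simp: seg_edges_alpha_def)
  with pos have "\<forall>e\<in>?H'. w e > 0"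
    by blast
  then have "dist_in ?H' w (P ! (I ! l)) (P ! (I ! r)) \<le> ereal (\<alpha> * segment_weight w P (I ! l) (I ! r))"
    using strict_sorted_imp_sorted[OF sorted] less_imp_le[OF assms(11)] assms(12)
      dist_in_completion_segment[OF pos assms(3) walk seg]
    by (rule dist_in_le_segment_weight_chain)
  also have "\<dots> = ereal \<alpha> * ereal (segment_weight w P (I ! l) (I ! r))"
    by simp
  also have "\<dots> \<le> ereal \<alpha> * dist_in E w (P ! (I ! l)) (P ! (I ! r))"
    using shortest_path_segment_weight[OF assms(9) idx] assms(3) by (intro ereal_mult_left_mono) simp_all
  finally show ?thesis .
qed

end
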